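(* Let $g \geq 1$, let $A \subseteq [N]$ be a nonempty $B_3[g]$-set, let $0 < \delta < \tfrac14$, let $l = \lfloor \frac{1}{2\delta} \rfloor$, and suppose $N > \frac{2}{\delta}$. For $1 \leq k \leq l$ let \[ C_k = \bigl( A \cap ((k-1)\delta N,\, k\delta N] \bigr) \cup \bigl( A \cap [(1-k\delta)N,\, (1-(k-1)\delta)N) \bigr), \] and define $\alpha_k(\delta)$ by $\alpha_k(\delta)|A| = |C_k|$. Then for every $1 \leq k \leq l$, \[ \alpha_k(\delta)^3 |A|^3 \leq 72\, g\, \delta N, \] i.e. whenever $\alpha_k(\delta) > 0$, $|A| \leq \left( \frac{72 g \delta N}{\alpha_k(\delta)^3}\right)^{1/3}$.
   Context: $[N] = \{1,2,\dots,N\}$. For positive integers $h,g$, a set $A \subseteq [N]$ is a $B_h[g]$-set if for every integer $n$ there are at most $g$ distinct multisets $\{a_1,\dots,a_h\}$ of size $h$ with all $a_i \in A$ and $a_1 + \dots + a_h = n$. *)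

theory Defs
  imports "HOL-Analysis.Analysis" "HOL-Library.Multiset"
begin

definition Bhg_set :: "nat \<Rightarrow> nat \<Rightarrow> nat set \<Rightarrow> bool" where
  "Bhg_set h g A \<longleftrightarrow>
     (\<forall>n::nat. finite {M :: nat multiset. set_mset M \<subseteq> A \<and> size M = h \<and> sum_mset M = n}
        \<and> card {M :: nat multiset. set_mset M \<subseteq> A \<and> size M = h \<and> sum_mset M = n} \<le> g)"

definition Ck :: "nat set \<Rightarrow> real \<Rightarrow> nat \<Rightarrow> nat \<Rightarrow> nat set" where
  "Ck A \<delta> N k =
     {a \<in> A. real (k - 1) * \<delta> * N < real a \<and> real a \<le> real k * \<delta> * N}
   \<union> {a \<in> A. (1 - real k * \<delta>) * N \<le> real a \<and> real a < (1 - real (k - 1) * \<delta>) * N}"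

definition alpha_k :: "nat set \<Rightarrow> real \<Rightarrow> nat \<Rightarrow> nat \<Rightarrow> real" where
  "alpha_k A \<delta> N k = real (card (Ck A \<delta> N k)) / real (card A)"

end

theory Submission
  imports Defs
begin

text \<open>The set C_k lies in two windows of length D = \<delta>N, so it has at most 2D + 2 elements,
  and the sum of a 3-element multiset from C_k lies in one of four windows of length 3D,
  according to how many of its elements come from the lower window. Hence these sums take at
  most 4(3D + 1) values, and by the B_3[g] property each value is the sum of at most g of the
  c(c + 1)(c + 2)/6 multisets, where c = |C_k|. So c(c + 1)(c + 2) \<le> 24g(3D + 1), which together
  with c \<le> 2D + 2 gives c^3 \<le> 72gD.\<close>

definition nat_window :: "real \<Rightarrow> real \<Rightarrow> nat set" where
  "nat_window x d = {n. x \<le> real n \<and> real n \<le> x + d}"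

lemma finite_nat_window: "finite (nat_window x d)"
proof (rule finite_subset)
  show "nat_window x d \<subseteq> {..nat \<lceil>x + d\<rceil>}"
    unfolding nat_window_def by (auto simp: le_nat_iff ceiling_le_iff le_ceiling_iff)
qed simp

lemma card_nat_window_le:
  assumes "d \<ge> 0"
  shows "real (card (nat_window x d)) \<le> d + 1"
proof (cases "nat_window x d = {}")
  case True
  then show ?thesis using assms by simp
next
  case False
  let ?W = "nat_window x d"
  have fin: "finite ?W" by (rule finite_nat_window)
  have "card ?W \<le> card {Min ?W..Max ?W}"
    using fin False by (intro card_mono) auto
  moreover have "Min ?W \<le> Max ?W"
    using fin False by simp
  moreover have "real (Max ?W) - real (Min ?W) \<le> d"
    using Max_in[OF fin False] Min_in[OF fin False] unfolding nat_window_def by auto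
  ultimately show ?thesis by (simp add: of_nat_diff)
qed

lemma card_subset_nat_windows_le:
  assumes "C \<subseteq> nat_window a d \<union> nat_window b d" and "d \<ge> 0"
  shows "real (card C) \<le> 2 * d + 2"
proof -
  have "card C \<le> card (nat_window a d \<union> nat_window b d)"
    using assms(1) by (intro card_mono) (simp_all add: finite_nat_window)
  also have "\<dots> \<le> card (nat_window a d) + card (nat_window b d)"
    by (rule card_Un_le)
  finally have "real (card C) \<le> real (card (nat_window a d)) + real (card (nat_window b d))"
    by (simp only: of_nat_add[symmetric] of_nat_le_iff)
  also have "\<dots> \<le> (d + 1) + (d + 1)"
    using assms(2) by (intro add_mono card_nat_window_le)
  finally show ?thesis
    by simp
qed

lemma sum_mset_mem_nat_window:
  assumes "set_mset M \<subseteq> nat_window a d \<union> nat_window b d"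
  shows "\<exists>t\<le>size M. sum_mset M \<in> nat_window (real t * a + real (size M - t) * b) (real (size M) * d)"
  using assms
proof (induction M)
  case empty
  then show ?case by (simp add: nat_window_def)
next
  case (add x M)
  then obtain t where t: "t \<le> size M"
    and sum: "sum_mset M \<in> nat_window (real t * a + real (size M - t) * b) (real (size M) * d)"
    by auto
  have "x \<in> nat_window a d \<or> x \<in> nat_window b d"
    using add.prems by auto
  then show ?case
  proof
    assume "x \<in> nat_window a d"
    then show ?case
      using t sum by (intro exI[of _ "Suc t"]) (auto simp: nat_window_def algebra_simps)
  next
    assume "x \<in> nat_window b d"
    moreover have "size (add_mset x M) - t = Suc (size M - t)"
      using t by simp
    ultimately show ?case
      using t sum by (intro exI[of _ t]) (auto simp: nat_window_def algebra_simps)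
  qed
qed

lemma card_sum_mset_image_le:
  assumes "C \<subseteq> nat_window a d \<union> nat_window b d" and "d \<ge> 0"
  shows "real (card (sum_mset ` multisets_of_size C h)) \<le> real (h + 1) * (real h * d + 1)"
proof -
  let ?J = "\<lambda>t. nat_window (real t * a + real (h - t) * b) (real h * d)"
  have "sum_mset ` multisets_of_size C h \<subseteq> (\<Union>t\<le>h. ?J t)"
  proof
    fix n assume "n \<in> sum_mset ` multisets_of_size C h"
    then obtain M where M: "M \<in> multisets_of_size C h" "n = sum_mset M"
      by blast
    then have "set_mset M \<subseteq> nat_window a d \<union> nat_window b d" "size M = h"
      using assms(1) by (auto dest: multisets_of_size_subset multisets_of_size_size)
    then obtain t where "t \<le> h" "n \<in> ?J t"
      using sum_mset_mem_nat_window[of M a d b] M(2) by blast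
    then show "n \<in> (\<Union>t\<le>h. ?J t)" by blast
  qed
  then have "card (sum_mset ` multisets_of_size C h) \<le> card (\<Union>t\<le>h. ?J t)"
    by (intro card_mono) (auto intro: finite_nat_window)
  also have "\<dots> \<le> (\<Sum>t\<le>h. card (?J t))"
    by (rule card_UN_le) simp
  finally have "real (card (sum_mset ` multisets_of_size C h)) \<le> (\<Sum>t\<le>h. real (card (?J t)))"
    unfolding of_nat_sum[symmetric] of_nat_le_iff .
  also have "\<dots> \<le> (\<Sum>t\<le>h. real h * d + 1)"
    using assms(2) by (intro sum_mono card_nat_window_le) simp
  finally show ?thesis by simp
qed

lemma Bhg_set_card_multisets_of_size_le:
  assumes "Bhg_set h g A" and "C \<subseteq> A" and "finite C"
  shows "card (multisets_of_size C h) \<le> g * card (sum_mset ` multisets_of_size C h)"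
proof -
  let ?S = "multisets_of_size C h"
  have fibre: "card {M \<in> ?S. sum_mset M = n} \<le> g" for n
  proof -
    let ?R = "{M. set_mset M \<subseteq> A \<and> size M = h \<and> sum_mset M = n}"
    have "{M \<in> ?S. sum_mset M = n} \<subseteq> ?R"
      using assms(2) by (auto simp: multisets_of_size_def)
    moreover have "finite ?R" and "card ?R \<le> g"
      using assms(1) unfolding Bhg_set_def by auto
    ultimately show ?thesis by (meson card_mono order_trans)
  qed
  have "card ?S = card (\<Union>n\<in>sum_mset ` ?S. {M \<in> ?S. sum_mset M = n})"
    by (rule arg_cong[where f = card]) auto
  also have "\<dots> \<le> (\<Sum>n\<in>sum_mset ` ?S. card {M \<in> ?S. sum_mset M = n})"
    using assms(3) by (intro card_UN_le) auto
  also have "\<dots> \<le> (\<Sum>n\<in>sum_mset ` ?S. g)"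
    by (intro sum_mono fibre)
  finally show ?thesis by (simp add: mult.commute)
qed

lemma six_times_choose_3: "6 * ((c + 2) choose 3) = c * (c + 1) * (c + 2)"
proof (induction c)
  case (Suc c)
  have "(Suc c + 2) choose 3 = ((c + 2) choose 2) + ((c + 2) choose 3)"
    by (simp add: numeral_3_eq_3 numeral_2_eq_2)
  moreover have "2 * ((c + 2) choose 2) = (c + 2) * (c + 1)"
    by (simp add: choose_two)
  ultimately show ?case
    using Suc.IH by (simp add: algebra_simps)
qed simp

lemma card_multisets_of_size_3:
  assumes "finite C"
  shows "6 * card (multisets_of_size C 3) = card C * (card C + 1) * (card C + 2)"
  using six_times_choose_3[of "card C"] by (simp add: card_multisets_of_size[OF assms])

lemma cube_le_of_rising_product_le:
  fixes c g D :: real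
  assumes "c * (c + 1) * (c + 2) \<le> g * (72 * D + 24)"
    and "0 \<le> c" and "c \<le> 2 * D + 2" and "D \<ge> 1" and "g \<ge> 0"
  shows "c ^ 3 \<le> 72 * g * D"
proof (cases "c\<^sup>2 \<ge> 8 * g")
  case True
  have "c * (c + 1) * (c + 2) = c ^ 3 + 3 * c\<^sup>2 + 2 * c"
    by (simp add: algebra_simps power2_eq_square power3_eq_cube)
  moreover have "g * (72 * D + 24) = 72 * g * D + 24 * g"
    by (simp add: algebra_simps)
  ultimately show ?thesis
    using assms(1,2) True by linarith
next
  case False
  have "c ^ 3 = c * c\<^sup>2" by (simp add: power2_eq_square power3_eq_cube)
  also have "\<dots> \<le> (2 * D + 2) * (8 * g)"
    using False assms by (intro mult_mono) auto
  also have "\<dots> = 16 * g + 16 * (g * D)"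
    by (simp add: algebra_simps)
  also have "\<dots> \<le> 72 * g * D"
    using mult_right_mono[OF \<open>D \<ge> 1\<close> \<open>g \<ge> 0\<close>] \<open>g \<ge> 0\<close> by simp
  finally show ?thesis .
qed

lemma Bhg_set_3_card_cube_le:
  assumes "Bhg_set 3 g A" and "C \<subseteq> A"
    and windows: "C \<subseteq> nat_window a d \<union> nat_window b d" and "d \<ge> 1"
  shows "real (card C) ^ 3 \<le> 72 * real g * d"
proof -
  have "finite C"
    using windows by (rule finite_subset) (simp add: finite_nat_window)
  have "real (card C * (card C + 1) * (card C + 2)) = 6 * real (card (multisets_of_size C 3))"
    using card_multisets_of_size_3[OF \<open>finite C\<close>] by linarith
  also have "\<dots> \<le> 6 * (real g * real (card (sum_mset ` multisets_of_size C 3)))"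
    using Bhg_set_card_multisets_of_size_le[OF assms(1,2) \<open>finite C\<close>]
    by (simp flip: of_nat_mult)
  also have "\<dots> \<le> 6 * (real g * (4 * (3 * d + 1)))"
    using card_sum_mset_image_le[OF windows, of 3] \<open>d \<ge> 1\<close> by (intro mult_left_mono) auto
  finally have "real (card C) * (real (card C) + 1) * (real (card C) + 2) \<le> real g * (72 * d + 24)"
    by (simp add: algebra_simps)
  then show ?thesis
    using card_subset_nat_windows_le[OF windows] \<open>d \<ge> 1\<close>
    by (intro cube_le_of_rising_product_le) auto
qed

lemma Ck_subset_nat_windows:
  assumes "1 \<le> k"
  shows "Ck A \<delta> N k \<subseteq>
    nat_window (real (k - 1) * \<delta> * real N) (\<delta> * real N) \<union>
    nat_window ((1 - real k * \<delta>) * real N) (\<delta> * real N)"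
proof
  fix a assume "a \<in> Ck A \<delta> N k"
  obtain j where k: "k = Suc j"
    using assms by (cases k) auto
  have ends: "real j * \<delta> * real N + \<delta> * real N = real (Suc j) * \<delta> * real N"
    "(1 - real (Suc j) * \<delta>) * real N + \<delta> * real N = (1 - real j * \<delta>) * real N"
    by (simp_all add: algebra_simps)
  from \<open>a \<in> Ck A \<delta> N k\<close> consider
      "real j * \<delta> * real N < real a" "real a \<le> real (Suc j) * \<delta> * real N"
    | "(1 - real (Suc j) * \<delta>) * real N \<le> real a" "real a < (1 - real j * \<delta>) * real N"
    unfolding Ck_def k diff_Suc_1 by blast
  then show "a \<in> nat_window (real (k - 1) * \<delta> * real N) (\<delta> * real N) \<union>
      nat_window ((1 - real k * \<delta>) * real N) (\<delta> * real N)"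
    unfolding k diff_Suc_1 nat_window_def ends Un_iff mem_Collect_eq
    by cases (blast dest: less_imp_le)+
qed

theorem lemma2p2:
  fixes A :: "nat set" and g N k :: nat and \<delta> :: real
  assumes "g \<ge> 1"
    and "A \<subseteq> {1..N}" and "A \<noteq> {}"
    and "Bhg_set 3 g A"
    and "0 < \<delta>" and "\<delta> < 1/4"
    and "real N > 2 / \<delta>"
    and "1 \<le> k" and "real k \<le> of_int \<lfloor>1 / (2 * \<delta>)\<rfloor>"
  shows "(alpha_k A \<delta> N k) ^ 3 * real (card A) ^ 3 \<le> 72 * real g * \<delta> * real N"
proof -
  define C where "C = Ck A \<delta> N k"
  have "\<delta> * real N \<ge> 1"
    using assms(5,7) by (simp add: field_simps)
  have "C \<subseteq> A"
    unfolding C_def Ck_def by auto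
  have "real (card C) ^ 3 \<le> 72 * real g * (\<delta> * real N)"
    using Bhg_set_3_card_cube_le[OF assms(4) \<open>C \<subseteq> A\<close>] Ck_subset_nat_windows[OF \<open>1 \<le> k\<close>]
      \<open>\<delta> * real N \<ge> 1\<close> unfolding C_def by blast
  moreover have "alpha_k A \<delta> N k * real (card A) = real (card C)"
    using finite_subset[OF assms(2)] assms(3) by (simp add: alpha_k_def C_def)
  ultimately show ?thesis
    by (simp add: mult.assoc flip: power_mult_distrib)
qed

end
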